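(* Let $1\le a<b<c\le n$ and let $M$ be the rank-$3$ shifted matroid on $[n]$ indexed by $\{a,b,c\}$, i.e. the matroid with bases $\{\{a',b',c'\}:1\le a'<b'<c'\le n,\ a'\le a,\ b'\le b,\ c'\le c\}$. Then $M$ is DJS if and only if $\lfloor\frac{c-b}{2}\rfloor<a$.
   Context: A rank-$3$ matroid $M$ on $[n]$ is called DJS if, letting $E$ be the set of non-loop elements of $M$, every linear ordering $w_1w_2\cdots w_m$ of $E$ has three consecutive elements $\{w_j,w_{j+1},w_{j+2}\}$ forming a basis of $M$. *)

theory Defs
  imports Main
begin

definition shifted_bases :: "nat \<Rightarrow> nat \<Rightarrow> nat \<Rightarrow> nat \<Rightarrow> nat set set" where
  "shifted_bases n a b c =
     {{a', b', c'} | a' b' c'. 1 \<le> a' \<and> a' < b' \<and> b' < c' \<and> c' \<le> n \<and>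
                              a' \<le> a \<and> b' \<le> b \<and> c' \<le> c}"

definition nonloops :: "'a set \<Rightarrow> 'a set set \<Rightarrow> 'a set" where
  "nonloops E B = {x \<in> E. \<exists>X\<in>B. x \<in> X}"

definition DJS :: "'a set \<Rightarrow> 'a set set \<Rightarrow> bool" where
  "DJS E B \<longleftrightarrow>
     (\<forall>w. distinct w \<and> set w = nonloops E B \<longrightarrow>
        (\<exists>j. j + 2 < length w \<and> {w ! j, w ! (j + 1), w ! (j + 2)} \<in> B))"

end

theory Submission
  imports Defs
begin

(* A triple of distinct elements of [c] is a basis iff it contains an element at most a and at
  most one element greater than b, and every element of [c] lies in a basis. Hence an ordering
  of [c] has no basis among three consecutive entries iff every entry at most a is surrounded,
  up to distance 2, by entries greater than b.
  If 2a > c - b, look at the position of a + 1 in such an ordering: each entry at most a has its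
  two neighbours on the side of a + 1 greater than b, and these pairs are disjoint, so
  2a <= c - b, a contradiction. If 2a <= c - b, interleaving each i <= a with two large entries
  gives an ordering without a basis window. *)

lemma nat_mult_3_add_cases:
  fixes k :: nat
  obtains q r where "k = 3 * q + r" "r < 3"
proof
  show "k = 3 * (k div 3) + k mod 3" "k mod 3 < 3"
    by simp_all
qed

lemma distinct_card_positions:
  assumes "distinct w"
  shows "card {i. i < length w \<and> P (w ! i)} = card ({x. P x} \<inter> set w)"
  using length_filter_conv_card[of P w] distinct_length_filter[OF assms, of P] by simp

lemma two_card_le_card_of_neighbours:
  fixes S L :: "nat set"
  assumes "finite L" "S \<subseteq> {..<m}" "q < m" "q \<notin> S \<union> L" "S \<inter> L = {}"
    and neighbours: "\<And>p k. p \<in> S \<Longrightarrow> k < m \<Longrightarrow> k \<noteq> p \<Longrightarrow> k \<le> p + 2 \<Longrightarrow> p \<le> k + 2 \<Longrightarrow> k \<in> L"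
  shows "2 * card S \<le> card L"
proof -
  have far_from_q: "p + 3 \<le> q \<or> q + 3 \<le> p" if "p \<in> S" for p
    using neighbours[OF that assms(3)] assms(4) that by fastforce
  have far_apart: "p + 3 \<le> p' \<or> p' + 3 \<le> p" if "p \<in> S" "p' \<in> S" "p \<noteq> p'" for p p'
    using neighbours[OF that(1), of p'] assms(2,5) that by fastforce
  (* Each p in S has its two neighbours on the side of q in L, and these pairs are disjoint
    because distinct points of S are at distance at least 3. *)
  define toward_q where "toward_q = (\<lambda>(p, i::nat). if p < q then p + 1 + i else p - 1 - i)"
  have "inj_on toward_q (S \<times> {0, 1})"
  proof (rule inj_onI, clarify)
    fix p i p' i'
    assume "p \<in> S" "p' \<in> S" "i \<in> {0, 1}" "i' \<in> {0, 1}" "toward_q (p, i) = toward_q (p', i')"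
    with far_from_q[of p] far_from_q[of p'] far_apart[of p p'] show "p = p' \<and> i = i'"
      unfolding toward_q_def by (cases "p = p'") (auto split: if_splits)
  qed
  moreover have "toward_q ` (S \<times> {0, 1}) \<subseteq> L"
  proof clarify
    fix p i assume "p \<in> S" "i \<in> {0::nat, 1}"
    with far_from_q[of p] assms(2,3) show "toward_q (p, i) \<in> L"
      unfolding toward_q_def by (intro neighbours) auto
  qed
  ultimately have "card (S \<times> {0::nat, 1}) \<le> card L"
    using assms(1) by (rule card_inj_on_le)
  then show ?thesis
    by (simp add: card_cartesian_product)
qed

lemma triple_in_shifted_bases_iff:
  assumes "distinct [x, y, z]" "{x, y, z} \<subseteq> {1..c}" "c \<le> n"
  shows "{x, y, z} \<in> shifted_bases n a b c \<longleftrightarrow>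
    (x \<le> a \<or> y \<le> a \<or> z \<le> a) \<and> (x \<le> b \<and> y \<le> b \<or> x \<le> b \<and> z \<le> b \<or> y \<le> b \<and> z \<le> b)"
    (is "_ \<longleftrightarrow> ?cond")
proof
  assume "{x, y, z} \<in> shifted_bases n a b c"
  then obtain u v t where uvt: "{x, y, z} = {u, v, t}" "u < v" "v < t" "u \<le> a" "v \<le> b"
    unfolding shifted_bases_def by blast
  from uvt(1) have "u = x \<or> u = y \<or> u = z" "v = x \<or> v = y \<or> v = z"
    by blast+
  with uvt(2-5) show ?cond
    by (elim disjE) auto
next
  have increasing_basis: "{u, v, t} \<in> shifted_bases n a b c"
    if "{u, v, t} \<subseteq> {1..c}" "u < v" "v < t" "u \<le> a" "v \<le> b" for u v t
  proof -
    have "1 \<le> u" "t \<le> c" "t \<le> n"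
      using that assms(3) by auto
    then show ?thesis
      unfolding shifted_bases_def using that(2-5) by blast
  qed
  assume ?cond
  consider "x < y" "y < z" | "x < z" "z < y" | "y < x" "x < z"
    | "y < z" "z < x" | "z < x" "x < y" | "z < y" "y < x"
    using assms(1) by (auto simp: neq_iff)
  then show "{x, y, z} \<in> shifted_bases n a b c"
  proof cases
    case 1
    with \<open>?cond\<close> show ?thesis using increasing_basis[of x y z] assms(2) by auto
  next
    case 2
    with \<open>?cond\<close> show ?thesis using increasing_basis[of x z y] assms(2) by (auto simp: insert_commute)
  next
    case 3
    with \<open>?cond\<close> show ?thesis using increasing_basis[of y x z] assms(2) by (auto simp: insert_commute)
  next
    case 4
    with \<open>?cond\<close> show ?thesis using increasing_basis[of y z x] assms(2) by (auto simp: insert_commute)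
  next
    case 5
    with \<open>?cond\<close> show ?thesis using increasing_basis[of z x y] assms(2) by (auto simp: insert_commute)
  next
    case 6
    with \<open>?cond\<close> show ?thesis using increasing_basis[of z y x] assms(2) by (auto simp: insert_commute)
  qed
qed

lemma nonloops_shifted_bases:
  assumes "1 \<le> a" "a < b" "b < c" "c \<le> n"
  shows "nonloops {1..n} (shifted_bases n a b c) = {1..c}"
proof -
  have one_two_basis: "{1, 2, x} \<in> shifted_bases n a b c" if "x \<in> {2<..c}" for x
  proof -
    have "distinct [1, 2, x]" "{1, 2, x} \<subseteq> {1..c}" using assms that by auto
    then show ?thesis using assms triple_in_shifted_bases_iff by simp
  qed
  have "\<exists>X \<in> shifted_bases n a b c. x \<in> X" if "x \<in> {1..c}" for x
  proof (cases "x \<le> 2")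
    case True
    then show ?thesis
      using one_two_basis[of c] assms that by (intro bexI[of _ "{1, 2, c}"]) auto
  next
    case False
    then show ?thesis
      using one_two_basis[of x] that by (intro bexI[of _ "{1, 2, x}"]) auto
  qed
  moreover have "X \<subseteq> {1..c}" if "X \<in> shifted_bases n a b c" for X
    using that unfolding shifted_bases_def by auto
  ultimately show ?thesis
    using assms(4) unfolding nonloops_def by auto
qed

definition has_close_pair :: "nat \<Rightarrow> nat \<Rightarrow> nat list \<Rightarrow> bool" where
  "has_close_pair a b w \<longleftrightarrow>
     (\<exists>p<length w. \<exists>k<length w. p \<noteq> k \<and> k \<le> p + 2 \<and> p \<le> k + 2 \<and> w ! p \<le> a \<and> w ! k \<le> b)"

lemma window_in_shifted_bases_iff:
  assumes "distinct w" "set w \<subseteq> {1..c}" "c \<le> n" "a \<le> b" "j + 2 < length w"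
  shows "{w ! j, w ! (j + 1), w ! (j + 2)} \<in> shifted_bases n a b c \<longleftrightarrow>
    (\<exists>p\<in>{j, j + 1, j + 2}. \<exists>k\<in>{j, j + 1, j + 2}. p \<noteq> k \<and> w ! p \<le> a \<and> w ! k \<le> b)"
proof -
  have "{w ! j, w ! (j + 1), w ! (j + 2)} \<subseteq> set w"
    using assms(5) by simp
  with assms(2) have "{w ! j, w ! (j + 1), w ! (j + 2)} \<subseteq> {1..c}"
    by blast
  moreover have "distinct [w ! j, w ! (j + 1), w ! (j + 2)]"
    using assms(1,5) by (simp add: nth_eq_iff_index_eq)
  ultimately show ?thesis
    using assms(3,4) by (simp add: triple_in_shifted_bases_iff) auto
qed

lemma DJS_shifted_bases_iff:
  assumes "1 \<le> a" "a < b" "b < c" "c \<le> n"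
  shows "DJS {1..n} (shifted_bases n a b c) \<longleftrightarrow>
    (\<forall>w. distinct w \<and> set w = {1..c} \<longrightarrow> has_close_pair a b w)"
proof -
  have "(\<exists>j. j + 2 < length w \<and> {w ! j, w ! (j + 1), w ! (j + 2)} \<in> shifted_bases n a b c)
      \<longleftrightarrow> has_close_pair a b w" if w: "distinct w" "set w = {1..c}" for w
  proof -
    have window_iff: "{w ! j, w ! (j + 1), w ! (j + 2)} \<in> shifted_bases n a b c \<longleftrightarrow>
        (\<exists>p\<in>{j, j + 1, j + 2}. \<exists>k\<in>{j, j + 1, j + 2}. p \<noteq> k \<and> w ! p \<le> a \<and> w ! k \<le> b)"
      if "j + 2 < length w" for j
      using window_in_shifted_bases_iff[OF w(1) _ assms(4) _ that] w(2) assms(2) by simp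
    show ?thesis
    proof
      assume "\<exists>j. j + 2 < length w \<and> {w ! j, w ! (j + 1), w ! (j + 2)} \<in> shifted_bases n a b c"
      then obtain j p k where j: "j + 2 < length w" "p \<in> {j, j + 1, j + 2}" "k \<in> {j, j + 1, j + 2}"
        and pk: "p \<noteq> k" "w ! p \<le> a" "w ! k \<le> b"
        using window_iff by blast
      from j have "p < length w" "k < length w" "k \<le> p + 2" "p \<le> k + 2"
        by auto
      with pk show "has_close_pair a b w"
        unfolding has_close_pair_def by blast
    next
      assume "has_close_pair a b w"
      then obtain p k where pk: "p < length w" "k < length w" "p \<noteq> k" "k \<le> p + 2" "p \<le> k + 2"
        "w ! p \<le> a" "w ! k \<le> b"
        unfolding has_close_pair_def by blast
      have "length w = c"
        using w distinct_card by fastforce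
      define j where "j = min (min p k) (length w - 3)"
      have "j + 2 < length w" "p \<in> {j, j + 1, j + 2}" "k \<in> {j, j + 1, j + 2}"
        using pk \<open>length w = c\<close> assms unfolding j_def by auto
      with pk window_iff
      show "\<exists>j. j + 2 < length w \<and> {w ! j, w ! (j + 1), w ! (j + 2)} \<in> shifted_bases n a b c"
        by blast
    qed
  qed
  then show ?thesis
    unfolding DJS_def nonloops_shifted_bases[OF assms] by blast
qed

lemma permutation_has_close_pair:
  assumes "c - b < 2 * a" "a < b" "b < c" "distinct w" "set w = {1..c}"
  shows "has_close_pair a b w"
proof (rule ccontr)
  assume no_pair: "\<not> has_close_pair a b w"
  define S where "S = {p. p < length w \<and> w ! p \<le> a}"
  define L where "L = {p. p < length w \<and> b < w ! p}"
  have "card S = card ({x. x \<le> a} \<inter> {1..c})"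
    unfolding S_def using distinct_card_positions[OF assms(4)] assms(5) by simp
  also have "{x. x \<le> a} \<inter> {1..c} = {1..a}"
    using assms(2,3) by auto
  finally have card_S: "card S = a"
    by simp
  have "card L = card ({x. b < x} \<inter> {1..c})"
    unfolding L_def using distinct_card_positions[OF assms(4)] assms(5) by simp
  also have "{x. b < x} \<inter> {1..c} = {b<..c}"
    using assms(2) by auto
  finally have card_L: "card L = c - b"
    by simp
  have "a + 1 \<in> set w"
    using assms(2,3,5) by simp
  then obtain q where q: "q < length w" "w ! q = a + 1"
    by (auto simp: in_set_conv_nth)
  have "2 * card S \<le> card L"
  proof (rule two_card_le_card_of_neighbours)
    show "q \<notin> S \<union> L" "S \<inter> L = {}"
      using q assms(2) unfolding S_def L_def by auto
    show "k \<in> L" if "p \<in> S" "k < length w" "k \<noteq> p" "k \<le> p + 2" "p \<le> k + 2" for p k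
      using no_pair that unfolding S_def L_def has_close_pair_def
      by (metis (mono_tags, lifting) mem_Collect_eq not_le)
  qed (use q in \<open>auto simp: S_def L_def\<close>)
  with card_S card_L assms(1) show False
    by simp
qed

(* Entry k (from 0) of the ordering 1, b+1, b+2, 2, b+3, b+4, ..., a, b+2a-1, b+2a,
  followed by b+2a+1, ..., c and then a+1, ..., b. *)
definition interleaved :: "nat \<Rightarrow> nat \<Rightarrow> nat \<Rightarrow> nat \<Rightarrow> nat" where
  "interleaved a b c k =
     (if k < 3 * a then if k mod 3 = 0 then k div 3 + 1 else b + 2 * (k div 3) + k mod 3
      else if k < a + (c - b) then k + b + 1 - a else k + b + 1 - c)"

lemma interleaved_mult_3_add:
  assumes "r < 3"
  shows "interleaved a b c (3 * q + r) =
     (if q < a then if r = 0 then q + 1 else b + 2 * q + r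
      else if 3 * q + r < a + (c - b) then 3 * q + r + b + 1 - a else 3 * q + r + b + 1 - c)"
  using assms unfolding interleaved_def by auto

lemma interleaved_permutation:
  assumes "2 * a \<le> c - b" "a < b" "b < c"
  shows "distinct (map (interleaved a b c) [0..<c])"
    and "set (map (interleaved a b c) [0..<c]) = {1..c}"
proof -
  have "inj_on (interleaved a b c) {..<c}"
  proof (rule inj_onI)
    fix k l assume "k \<in> {..<c}" "l \<in> {..<c}" "interleaved a b c k = interleaved a b c l"
    with assms show "k = l"
      by (cases k rule: nat_mult_3_add_cases; cases l rule: nat_mult_3_add_cases)
        (simp add: interleaved_mult_3_add split: if_splits; arith)
  qed
  then show "distinct (map (interleaved a b c) [0..<c])"
    by (simp add: distinct_map atLeast0LessThan)
  have "interleaved a b c k \<in> {1..c}" if "k < c" for k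
    using assms that by (cases k rule: nat_mult_3_add_cases) (auto simp: interleaved_mult_3_add)
  then have "interleaved a b c ` {..<c} \<subseteq> {1..c}"
    by auto
  moreover have "card (interleaved a b c ` {..<c}) = card {1..c}"
    using card_image[OF \<open>inj_on (interleaved a b c) {..<c}\<close>] by simp
  ultimately show "set (map (interleaved a b c) [0..<c]) = {1..c}"
    by (simp add: card_subset_eq atLeast0LessThan)
qed

lemma interleaved_has_no_close_pair:
  assumes "2 * a \<le> c - b" "a < b" "b < c"
  shows "\<not> has_close_pair a b (map (interleaved a b c) [0..<c])"
proof
  assume "has_close_pair a b (map (interleaved a b c) [0..<c])"
  then obtain p k where pk: "p < c" "k < c" "p \<noteq> k" "k \<le> p + 2" "p \<le> k + 2"
    "interleaved a b c p \<le> a" "interleaved a b c k \<le> b"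
    unfolding has_close_pair_def by auto
  obtain q where "p = 3 * q" "q < a"
    using pk(1,6) assms
    by (cases p rule: nat_mult_3_add_cases) (auto simp: interleaved_mult_3_add split: if_splits)
  moreover have "(\<exists>q'. k = 3 * q') \<or> 3 * a \<le> k"
    using pk(2,7) assms
    by (cases k rule: nat_mult_3_add_cases) (auto simp: interleaved_mult_3_add split: if_splits)
  ultimately show False
    using pk(3-5) by auto
qed

theorem proposition6p8:
  fixes n a b c :: nat
  assumes "1 \<le> a" and "a < b" and "b < c" and "c \<le> n"
  shows "DJS {1..n} (shifted_bases n a b c) \<longleftrightarrow> (c - b) div 2 < a"
proof -
  have "DJS {1..n} (shifted_bases n a b c) \<longleftrightarrow>
      (\<forall>w. distinct w \<and> set w = {1..c} \<longrightarrow> has_close_pair a b w)"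
    using assms by (rule DJS_shifted_bases_iff)
  also have "\<dots> \<longleftrightarrow> c - b < 2 * a"
  proof
    assume all_close: "\<forall>w. distinct w \<and> set w = {1..c} \<longrightarrow> has_close_pair a b w"
    show "c - b < 2 * a"
    proof (rule ccontr)
      assume "\<not> c - b < 2 * a"
      then have "2 * a \<le> c - b"
        by simp
      with all_close interleaved_permutation interleaved_has_no_close_pair assms(2,3) show False
        by blast
    qed
  next
    assume "c - b < 2 * a"
    then show "\<forall>w. distinct w \<and> set w = {1..c} \<longrightarrow> has_close_pair a b w"
      using permutation_has_close_pair assms(2,3) by blast
  qed
  also have "\<dots> \<longleftrightarrow> (c - b) div 2 < a"
    by linarith
  finally show ?thesis .
qed

end
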